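(* Let $\mathcal Q$ be a finite set of queries, where query $i$ has a size $s_i=\frac{|\mathcal S_i|\cdot\chi_i}{\mathbf p_i}>0$ and a positive weight $\mathbf w_i$. Let $c_2\ge 1$ and $c_3>1$ be constants and put $d=\frac{0.69}{c_2 c_3}$. Let $A_{[1]}=\{i^*\}$ where $i^*$ maximizes $\mathbf w_i$ over all queries $i$ with $s_i\le 1$ (and $A_{[1]}=\emptyset$ if there is none); let $A_{[2]}$ be an optimal solution of the 0-1 knapsack problem $\mathrm{KS}(d)$; and let $A$ be whichever of $A_{[1]},A_{[2]}$ has larger total weight. Let $OPT_{\mathrm{KS}(1)}$ be an optimal solution of $\mathrm{KS}(1)$. Then $$\frac{d}{2}\cdot\mathbf w\big(OPT_{\mathrm{KS}(1)}\big)\le \mathbf w(A).$$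
   Context: For a query $i$, $\mathcal S_i$ is its set of source nodes, $\chi_i>0$ is the time to transmit one of its data units over a link, and $\mathbf p_i>0$ is its period. For a set $B$ of queries, $\mathbf w(B)=\sum_{i\in B}\mathbf w_i$. The 0-1 knapsack problem with bag size $C$, denoted $\mathrm{KS}(C)$, treats each query $i$ as an item of size $s_i$ and weight $\mathbf w_i$, and asks for a subset of items of total size at most $C$ maximizing the total weight. In the paper, $c_2$ is the chromatic number of a coloring of interference-aware grid regions and $c_3$ is the maximum size of a connected dominating set inside an interference-aware region plus one, but only the stated numerical properties are used in the statement. *)

theory Defs
  imports Main Complex_Main
begin

definition qsize :: "('q \<Rightarrow> 'v set) \<Rightarrow> ('q \<Rightarrow> real) \<Rightarrow> ('q \<Rightarrow> real) \<Rightarrow> 'q \<Rightarrow> real" where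
  "qsize S chi p i = real (card (S i)) * chi i / p i"

definition ks_feasible :: "'q set \<Rightarrow> ('q \<Rightarrow> real) \<Rightarrow> real \<Rightarrow> 'q set \<Rightarrow> bool" where
  "ks_feasible Q s C B \<longleftrightarrow> B \<subseteq> Q \<and> sum s B \<le> C"

definition ks_optimal :: "'q set \<Rightarrow> ('q \<Rightarrow> real) \<Rightarrow> ('q \<Rightarrow> real) \<Rightarrow> real \<Rightarrow> 'q set \<Rightarrow> bool" where
  "ks_optimal Q s w C B \<longleftrightarrow> ks_feasible Q s C B \<and>
     (\<forall>B'. ks_feasible Q s C B' \<longrightarrow> sum w B' \<le> sum w B)"

end

theory Submission
  imports Defs
begin

text \<open>
  Call a set of items light if its total size is at most d; by the choice of A, every light
  subset of an optimal KS(1) solution and every single item of it weighs at most w(A).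
  An optimal KS(1) solution can be cut, piece by piece, into parts of size at least d/2 that
  are either light or a single item: if some item has size at least d/2 it forms a piece,
  otherwise adding items one at a time overshoots d/2 by less than d/2. Since the whole
  solution has size at most 1, there are at most 2/d pieces, each of weight at most w(A).
\<close>

lemma exists_subset_sum_between:
  fixes s :: "'a \<Rightarrow> real"
  assumes "finite B" "0 < h" "\<And>i. i \<in> B \<Longrightarrow> s i < h" "h \<le> sum s B"
  shows "\<exists>C\<subseteq>B. h \<le> sum s C \<and> sum s C < 2 * h"
  using assms
proof (induction B rule: finite_induct)
  case empty
  then show ?case by simp
next
  case (insert x F)
  show ?case
  proof (cases "h \<le> sum s F")
    case True
    with insert show ?thesis by blast
  next
    case False
    have "s x < h" using insert.prems by simp
    with False insert.hyps have "sum s (insert x F) < 2 * h" by simp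
    with insert show ?thesis by blast
  qed
qed

lemma exists_piece_singleton_or_light:
  fixes s :: "'a \<Rightarrow> real"
  assumes "finite B" "0 < d" "d / 2 \<le> sum s B"
  shows "\<exists>C\<subseteq>B. d / 2 \<le> sum s C \<and> (card C = 1 \<or> sum s C \<le> d)"
proof (cases "\<exists>i\<in>B. d / 2 \<le> s i")
  case True
  then obtain i where "i \<in> B" "d / 2 \<le> s i" by blast
  then show ?thesis by (intro exI[of _ "{i}"]) auto
next
  case False
  then have "\<And>i. i \<in> B \<Longrightarrow> s i < d / 2" by force
  from exists_subset_sum_between[OF assms(1) _ this assms(3)] assms(2) show ?thesis by force
qed

lemma sum_weight_le_by_pieces:
  fixes s w :: "'a \<Rightarrow> real"
  assumes "finite B" "d > 0"
    and "\<And>i. i \<in> B \<Longrightarrow> w i \<le> M"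
    and "\<And>C. C \<subseteq> B \<Longrightarrow> sum s C \<le> d \<Longrightarrow> sum w C \<le> M"
  shows "sum w B \<le> max 1 (2 * sum s B / d) * M"
  using assms
proof (induction "card B" arbitrary: B rule: less_induct)
  case less
  have M_nonneg: "0 \<le> M" using less.prems(4)[of "{}"] \<open>d > 0\<close> by simp
  show ?case
  proof (cases "sum s B \<le> d")
    case True
    then have "sum w B \<le> M" using less.prems by blast
    also have "\<dots> \<le> max 1 (2 * sum s B / d) * M" using M_nonneg by (simp add: mult_le_cancel_right1)
    finally show ?thesis .
  next
    case False
    obtain C where C: "C \<subseteq> B" "d / 2 \<le> sum s C" "card C = 1 \<or> sum s C \<le> d"
      using exists_piece_singleton_or_light[OF \<open>finite B\<close> \<open>d > 0\<close>, of s] False \<open>d > 0\<close> by auto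
    have wC: "sum w C \<le> M"
      using C(3)
    proof
      assume "card C = 1"
      then obtain i where "C = {i}" by (auto simp: card_Suc_eq)
      then show ?thesis using C(1) less.prems(3) by auto
    qed (use C(1) less.prems(4) in blast)
    have "C \<noteq> {}" using C(2) \<open>d > 0\<close> by auto
    then have "card (B - C) < card B"
      using C(1) \<open>finite B\<close> by (intro psubset_card_mono) auto
    then have IH: "sum w (B - C) \<le> max 1 (2 * sum s (B - C) / d) * M"
      using less by (intro less.hyps) auto
    have sBC: "sum s (B - C) = sum s B - sum s C"
      and wBC: "sum w B = sum w C + sum w (B - C)"
      using C(1) \<open>finite B\<close> by (simp_all add: sum_diff)
    have "max 1 (2 * sum s (B - C) / d) \<le> 2 * sum s B / d - 1"
      using sBC C(2) False \<open>d > 0\<close> by (simp add: field_simps)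
    then have "sum w (B - C) \<le> (2 * sum s B / d - 1) * M"
      using IH M_nonneg by (meson mult_right_mono order_trans)
    then have "sum w B \<le> 2 * sum s B / d * M" using wBC wC by (simp add: algebra_simps)
    also have "\<dots> \<le> max 1 (2 * sum s B / d) * M" using M_nonneg by (intro mult_right_mono) auto
    finally show ?thesis .
  qed
qed

corollary scaled_sum_le_by_pieces:
  fixes s w :: "'a \<Rightarrow> real"
  assumes "finite B" "0 < d" "d \<le> 2" "sum s B \<le> 1"
    and "\<And>i. i \<in> B \<Longrightarrow> w i \<le> M"
    and "\<And>C. C \<subseteq> B \<Longrightarrow> sum s C \<le> d \<Longrightarrow> sum w C \<le> M"
  shows "d / 2 * sum w B \<le> M"
proof -
  have M_nonneg: "0 \<le> M" using assms(6)[of "{}"] \<open>0 < d\<close> by simp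
  have "max 1 (2 * sum s B / d) \<le> 2 / d"
    using assms(2-4) by (auto simp: field_simps)
  then have "sum w B \<le> 2 / d * M"
    using sum_weight_le_by_pieces[OF assms(1,2,5,6)] M_nonneg by (meson mult_right_mono order_trans)
  then show ?thesis using \<open>0 < d\<close> by (simp add: field_simps)
qed

theorem lemma4:
  fixes Q :: "'q set" and S :: "'q \<Rightarrow> 'v set" and chi p w :: "'q \<Rightarrow> real"
    and c2 c3 d :: real and A1 A2 A OPT :: "'q set"
  assumes finQ: "finite Q"
    and finS: "\<And>i. i \<in> Q \<Longrightarrow> finite (S i)"
    and chi_pos: "\<And>i. i \<in> Q \<Longrightarrow> chi i > 0"
    and p_pos: "\<And>i. i \<in> Q \<Longrightarrow> p i > 0"
    and size_pos: "\<And>i. i \<in> Q \<Longrightarrow> qsize S chi p i > 0"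
    and w_pos: "\<And>i. i \<in> Q \<Longrightarrow> w i > 0"
    and c2: "c2 \<ge> 1" and c3: "c3 > 1"
    and d_def: "d = 0.69 / (c2 * c3)"
    and A1: "(\<not> (\<exists>i\<in>Q. qsize S chi p i \<le> 1) \<and> A1 = {}) \<or>
             (\<exists>i\<in>Q. qsize S chi p i \<le> 1 \<and>
                 (\<forall>j\<in>Q. qsize S chi p j \<le> 1 \<longrightarrow> w j \<le> w i) \<and> A1 = {i})"
    and A2: "ks_optimal Q (qsize S chi p) w d A2"
    and A_choice: "A = A1 \<or> A = A2"
    and A_max: "sum w A = max (sum w A1) (sum w A2)"
    and OPT: "ks_optimal Q (qsize S chi p) w 1 OPT"
  shows "d / 2 * sum w OPT \<le> sum w A"
proof -
  let ?s = "qsize S chi p"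
  have "1 \<le> c2 * c3" using c2 c3 using mult_mono[of 1 c2 1 c3] by simp
  then have d_pos: "0 < d" and d_le: "d \<le> 2" unfolding d_def by (simp_all add: divide_le_eq)
  have OPT_sub: "OPT \<subseteq> Q" and OPT_size: "sum ?s OPT \<le> 1"
    using OPT unfolding ks_optimal_def ks_feasible_def by blast+
  have "w i \<le> sum w A" if "i \<in> OPT" for i
  proof -
    have "?s i \<le> sum ?s OPT"
      using that OPT_sub size_pos finite_subset[OF OPT_sub finQ]
      by (intro member_le_sum) (auto intro: less_imp_le)
    with that OPT_sub OPT_size have "i \<in> Q" "?s i \<le> 1" by auto
    with A1 obtain k where "A1 = {k}" "w i \<le> w k" by blast
    then show ?thesis using A_max by simp
  qed
  moreover have "sum w C \<le> sum w A" if "C \<subseteq> OPT" "sum ?s C \<le> d" for C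
  proof -
    have "ks_feasible Q ?s d C" using that OPT_sub unfolding ks_feasible_def by blast
    with A2 have "sum w C \<le> sum w A2" unfolding ks_optimal_def by blast
    then show ?thesis using A_max by simp
  qed
  ultimately show ?thesis
    using scaled_sum_le_by_pieces[OF finite_subset[OF OPT_sub finQ] d_pos d_le OPT_size] by blast
qed

end
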